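(* Every finite affinely independent set $A\subset\mathbb{R}^n$ is Euclidean sub-$p$-toral for all sufficiently large primes $p\ge p_0(A)$.
   Context: A $p$-torus is a group isomorphic to $(\mathbb{Z}_p)^\alpha$ for some $\alpha\ge1$. A set $X\subset\mathbb{R}^k$ is Euclidean sub-$p$-toral if there exist $n\ge k$, a $p$-torus $G$ and an action of $G$ on $\mathbb{R}^n$ by isometries such that $X$ (viewed in $\mathbb{R}^n$ via the standard inclusion $\mathbb{R}^k\subset\mathbb{R}^n$) is contained in a single $G$-orbit. *)

theory Defs
  imports "HOL-Analysis.Analysis" "HOL-Algebra.Group_Action" "HOL-Algebra.Product_Groups"
    "HOL-Algebra.Elementary_Groups"
begin

text \<open>Euclidean space R^n, modelled as real sequences vanishing from index n on.
  The standard inclusion R^k \<subseteq> R^n (k \<le> n) is then literally set inclusion.\<close>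
definition Rn :: "nat \<Rightarrow> (nat \<Rightarrow> real) set" where
  "Rn n = {x. \<forall>i\<ge>n. x i = 0}"

definition edist :: "nat \<Rightarrow> (nat \<Rightarrow> real) \<Rightarrow> (nat \<Rightarrow> real) \<Rightarrow> real" where
  "edist n x y = sqrt (\<Sum>i<n. (x i - y i)^2)"

definition affinely_independent :: "(nat \<Rightarrow> real) set \<Rightarrow> bool" where
  "affinely_independent A \<longleftrightarrow>
     (\<forall>c. (\<Sum>a\<in>A. c a) = 0 \<and> (\<forall>i. (\<Sum>a\<in>A. c a * a i) = 0) \<longrightarrow> (\<forall>a\<in>A. c a = 0))"

definition p_torus :: "nat \<Rightarrow> nat \<Rightarrow> (nat \<Rightarrow> int) monoid" where
  "p_torus p \<alpha> = product_group {..<\<alpha>} (\<lambda>_. integer_mod_group p)"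

definition euclidean_sub_p_toral :: "nat \<Rightarrow> nat \<Rightarrow> (nat \<Rightarrow> real) set \<Rightarrow> bool" where
  "euclidean_sub_p_toral p k X \<longleftrightarrow>
     (\<exists>n \<ge> k. \<exists>\<alpha> \<ge> 1. \<exists>\<phi>.
        group_action (p_torus p \<alpha>) (Rn n) \<phi> \<and>
        (\<forall>g \<in> carrier (p_torus p \<alpha>). \<forall>x \<in> Rn n. \<forall>y \<in> Rn n.
            edist n (\<phi> g x) (\<phi> g y) = edist n x y) \<and>
        (\<exists>x0 \<in> Rn n. X \<subseteq> orbit (p_torus p \<alpha>) \<phi> x0))"

end

theory Submission
  imports Defs
begin

text \<open>
  Let the torus \<open>(Z/p)^\<alpha>\<close> act on \<open>R^(2B)\<close> by rotating the \<open>b\<close>-th coordinate plane through the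
  angle \<open>2 pi chi_b(g) / p\<close>, where the \<open>chi_b\<close> are characters. Squared distances within an orbit
  are then nonnegative combinations of squared chords \<open>|zeta^m - 1|^2\<close> between \<open>p\<close>-th roots of
  unity, with \<open>m = chi_b(g) - chi_b(g')\<close>; conversely every finite set whose squared distances
  have this shape is congruent to part of an orbit, and extending the congruence to an
  isometry of \<open>R^n\<close> (a product of reflections) puts the set itself into an orbit of the
  conjugated action.

  For an affinely independent set \<open>A\<close>, move each point \<open>a\<close> a little against the gradient \<open>W a\<close> of
  its barycentric coordinate: every squared distance drops by \<open>4s\<close> up to \<open>O(s^2)\<close>. For large \<open>p\<close>
  the squared coordinate differences of the moved points are approximated by rescaled squared
  chords of rounded coordinates, and the remaining excess, being nearly constant off the
  diagonal, is a nonnegative combination of the cut semimetrics of singletons and pairs,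
  each of which is a single squared chord.
\<close>

section \<open>Euclidean geometry of \<open>Rn\<close>\<close>

definition sqdist :: "nat \<Rightarrow> (nat \<Rightarrow> real) \<Rightarrow> (nat \<Rightarrow> real) \<Rightarrow> real" where
  "sqdist n x y = (\<Sum>i<n. (x i - y i)^2)"

definition dot :: "nat \<Rightarrow> (nat \<Rightarrow> real) \<Rightarrow> (nat \<Rightarrow> real) \<Rightarrow> real" where
  "dot n x y = (\<Sum>i<n. x i * y i)"

lemma edist_eq_sqrt_sqdist: "edist n x y = sqrt (sqdist n x y)"
  by (simp add: edist_def sqdist_def)

lemma sqdist_nonneg: "0 \<le> sqdist n x y"
  by (simp add: sqdist_def sum_nonneg)

lemma sqdist_commute: "sqdist n x y = sqdist n y x"
  unfolding sqdist_def by (rule sum.cong) (auto simp: power2_commute)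

lemma sqdist_self [simp]: "sqdist n x x = 0"
  by (simp add: sqdist_def)

lemma sqdist_eq_dot: "sqdist n x y = dot n (\<lambda>i. x i - y i) (\<lambda>i. x i - y i)"
  by (simp add: sqdist_def dot_def power2_eq_square)

lemma dot_commute: "dot n x y = dot n y x"
  by (simp add: dot_def mult.commute)

lemma dot_diff_left: "dot n (\<lambda>i. x i - z i) y = dot n x y - dot n z y"
  by (simp add: dot_def left_diff_distrib sum_subtractf)

lemma dot_scale_left: "dot n (\<lambda>i. t * x i) y = t * dot n x y"
  by (simp add: dot_def sum_distrib_left mult.assoc)

lemma dot_divide_left: "dot n (\<lambda>i. x i / t) y = dot n x y / t"
  by (simp add: dot_def sum_divide_distrib)

lemma dot_sum_left: "dot n (\<lambda>i. \<Sum>j\<in>J. c j * f j i) y = (\<Sum>j\<in>J. c j * dot n (f j) y)"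
proof -
  have "dot n (\<lambda>i. \<Sum>j\<in>J. c j * f j i) y = (\<Sum>i<n. \<Sum>j\<in>J. c j * (f j i * y i))"
    by (simp add: dot_def sum_distrib_right mult.assoc)
  also have "\<dots> = (\<Sum>j\<in>J. c j * dot n (f j) y)"
    by (subst sum.swap) (simp add: dot_def sum_distrib_left)
  finally show ?thesis .
qed

lemma dot_self_pos:
  assumes "x i \<noteq> 0" "i < n" shows "0 < dot n x x"
  unfolding dot_def by (rule sum_pos2[of _ i]) (use assms in \<open>auto simp: zero_less_mult_iff\<close>)

lemma sqdist_shift:
  "sqdist n (\<lambda>i. x i - s * u i) (\<lambda>i. y i - s * v i)
     = sqdist n x y - 2 * s * dot n (\<lambda>i. x i - y i) (\<lambda>i. u i - v i) + s^2 * sqdist n u v"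
  unfolding sqdist_def dot_def sum_distrib_left sum_subtractf[symmetric] sum.distrib[symmetric]
  by (rule sum.cong) (auto simp: power2_eq_square algebra_simps)

lemma sqdist_Rn_mono:
  assumes "x \<in> Rn k" "y \<in> Rn k" "k \<le> n"
  shows "sqdist n x y = sqdist k x y"
proof -
  have "{..<n} = {..<k} \<union> {k..<n}" using assms(3) by auto
  then have "sqdist n x y = sqdist k x y + (\<Sum>i\<in>{k..<n}. (x i - y i)^2)"
    unfolding sqdist_def by (simp add: sum.union_disjoint[of "{..<k}" "{k..<n}"] ivl_disj_int)
  also have "(\<Sum>i\<in>{k..<n}. (x i - y i)^2) = 0"
    using assms by (auto intro!: sum.neutral simp: Rn_def)
  finally show ?thesis by simp
qed

lemma sqdist_eq_0_Rn:
  assumes "x \<in> Rn n" "y \<in> Rn n" "sqdist n x y = 0" shows "x = y"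
proof
  fix i
  show "x i = y i"
  proof (cases "i < n")
    case True
    then show ?thesis
      using assms(3) unfolding sqdist_def by (subst (asm) sum_nonneg_eq_0_iff) auto
  next
    case False
    then show ?thesis using assms by (simp add: Rn_def)
  qed
qed

text \<open>Reflection in the perpendicular bisector of \<open>u\<close> and \<open>v\<close>: the coefficient equals
  \<open>2 \<langle>x - (u + v) / 2, u - v\<rangle> / |u - v|^2\<close> (see \<open>sqdist_difference_eq_dot\<close>).\<close>
definition reflection :: "nat \<Rightarrow> (nat \<Rightarrow> real) \<Rightarrow> (nat \<Rightarrow> real) \<Rightarrow> (nat \<Rightarrow> real) \<Rightarrow> (nat \<Rightarrow> real)" where
  "reflection n u v x =
     (\<lambda>i. x i - (sqdist n x v - sqdist n x u) / sqdist n u v * (u i - v i))"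

lemma sqdist_difference_eq_dot:
  "sqdist n x v - sqdist n x u = 2 * dot n (\<lambda>i. x i - (u i + v i) / 2) (\<lambda>i. u i - v i)"
  unfolding sqdist_def dot_def sum_subtractf[symmetric] sum_distrib_left
  by (rule sum.cong) (auto simp: power2_eq_square field_simps)

lemma reflection_coeff_shift:
  assumes "sqdist n u v \<noteq> 0"
  defines "c \<equiv> \<lambda>x. (sqdist n x v - sqdist n x u) / sqdist n u v"
  shows "c (\<lambda>i. x i - t * (u i - v i)) = c x - 2 * t"
proof -
  have "dot n (\<lambda>i. (x i - t * (u i - v i)) - (u i + v i) / 2) (\<lambda>i. u i - v i)
      = dot n (\<lambda>i. x i - (u i + v i) / 2) (\<lambda>i. u i - v i) - t * sqdist n u v"
    unfolding sqdist_def dot_def sum_distrib_left sum_subtractf[symmetric]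
    by (rule sum.cong) (auto simp: power2_eq_square algebra_simps)
  then show ?thesis
    using assms unfolding c_def sqdist_difference_eq_dot by (simp add: field_simps)
qed

lemma reflection_reflection:
  assumes "sqdist n u v \<noteq> 0"
  shows "reflection n u v (reflection n u v x) = x"
proof -
  let ?c = "\<lambda>x. (sqdist n x v - sqdist n x u) / sqdist n u v"
  have r: "reflection n u v x = (\<lambda>i. x i - ?c x * (u i - v i))" for x
    by (simp add: reflection_def)
  have "?c (reflection n u v x) = - ?c x"
    unfolding r[of x] reflection_coeff_shift[OF assms] by simp
  then show ?thesis
    unfolding r[of "reflection n u v x"] by (simp add: r)
qed

lemma reflection_swap:
  assumes "sqdist n u v \<noteq> 0"
  shows "reflection n u v u = v"
  using assms by (simp add: reflection_def)

lemma reflection_fixed: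
  assumes "sqdist n x u = sqdist n x v"
  shows "reflection n u v x = x"
  using assms by (simp add: reflection_def)

lemma sqdist_shift_along:
  "sqdist n (\<lambda>i. x i - s * w i) (\<lambda>i. y i - t * w i)
     = sqdist n x y - 2 * (s - t) * dot n (\<lambda>i. x i - y i) w + (s - t)^2 * dot n w w"
  unfolding sqdist_def dot_def sum_distrib_left sum_subtractf[symmetric] sum.distrib[symmetric]
  by (rule sum.cong) (auto simp: power2_eq_square algebra_simps)

lemma reflection_isometry:
  assumes "sqdist n u v \<noteq> 0"
  shows "sqdist n (reflection n u v x) (reflection n u v y) = sqdist n x y"
proof -
  let ?c = "\<lambda>x. (sqdist n x v - sqdist n x u) / sqdist n u v"
  let ?w = "\<lambda>i. u i - v i"
  have "dot n (\<lambda>i. x i - (u i + v i) / 2) ?w - dot n (\<lambda>i. y i - (u i + v i) / 2) ?w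
      = dot n (\<lambda>i. x i - y i) ?w"
    unfolding dot_def sum_subtractf[symmetric] by (rule sum.cong) (auto simp: algebra_simps)
  then have t: "?c x - ?c y = 2 * dot n (\<lambda>i. x i - y i) ?w / sqdist n u v"
    unfolding sqdist_difference_eq_dot diff_divide_distrib[symmetric] by (simp add: algebra_simps)
  have "sqdist n (reflection n u v x) (reflection n u v y)
      = sqdist n x y - 2 * (?c x - ?c y) * dot n (\<lambda>i. x i - y i) ?w + (?c x - ?c y)^2 * sqdist n u v"
    unfolding reflection_def sqdist_shift_along sqdist_eq_dot[of n u v] by simp
  also have "\<dots> = sqdist n x y"
    unfolding t using assms by (simp add: power2_eq_square)
  finally show ?thesis .
qed

lemma reflection_Rn: "u \<in> Rn n \<Longrightarrow> v \<in> Rn n \<Longrightarrow> x \<in> Rn n \<Longrightarrow> reflection n u v x \<in> Rn n"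
  by (simp add: Rn_def reflection_def)

lemma finite_isometry_extension:
  assumes "finite S" "S \<subseteq> Rn n" "f ` S \<subseteq> Rn n"
    and "\<And>a a'. a \<in> S \<Longrightarrow> a' \<in> S \<Longrightarrow> sqdist n (f a) (f a') = sqdist n a a'"
  shows "\<exists>\<Phi>. bij_betw \<Phi> (Rn n) (Rn n) \<and> (\<forall>x\<in>Rn n. \<forall>z\<in>Rn n. sqdist n (\<Phi> x) (\<Phi> z) = sqdist n x z)
       \<and> (\<forall>a\<in>S. \<Phi> (f a) = a)"
  using assms
proof (induction S rule: finite_induct)
  case empty
  show ?case by (rule exI[of _ id]) (auto simp: bij_betw_def)
next
  case (insert a S)
  then obtain \<Phi> where bij: "bij_betw \<Phi> (Rn n) (Rn n)"
    and iso: "\<forall>x\<in>Rn n. \<forall>z\<in>Rn n. sqdist n (\<Phi> x) (\<Phi> z) = sqdist n x z"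
    and fix_S: "\<forall>a\<in>S. \<Phi> (f a) = a" by auto
  have fa: "f a \<in> Rn n" and a: "a \<in> Rn n" using insert.prems by auto
  define z where "z = \<Phi> (f a)"
  have z: "z \<in> Rn n" using bij fa unfolding z_def by (auto simp: bij_betw_def)
  show ?case
  proof (cases "z = a")
    case True
    then show ?thesis using bij iso fix_S z_def by auto
  next
    case False
    then have za: "sqdist n z a \<noteq> 0" using sqdist_eq_0_Rn[OF z a] by blast
    \<comment> \<open>The reflection swapping \<open>z\<close> and \<open>a\<close> fixes \<open>S\<close>, which is equidistant from \<open>z\<close> and \<open>a\<close>.\<close>
    define \<Psi> where "\<Psi> = reflection n z a \<circ> \<Phi>"
    have "bij_betw \<Psi> (Rn n) (Rn n)" unfolding \<Psi>_def
    proof (rule bij_betw_trans[OF bij])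
      show "bij_betw (reflection n z a) (Rn n) (Rn n)"
        by (rule bij_betw_byWitness[where f'="reflection n z a"])
          (auto simp: reflection_reflection[OF za] reflection_Rn[OF z a])
    qed
    moreover have "\<Psi> (f a') = a'" if a': "a' \<in> S" for a'
    proof -
      have "sqdist n a' z = sqdist n a' a"
        using iso fix_S a' insert.prems fa unfolding z_def by (metis image_subset_iff insertCI)
      then show ?thesis unfolding \<Psi>_def using fix_S a' reflection_fixed by simp
    qed
    ultimately show ?thesis
      using iso reflection_isometry[OF za] reflection_swap[OF za] z_def by (auto simp: \<Psi>_def)
  qed
qed

definition block_rotation :: "nat \<Rightarrow> (nat \<Rightarrow> real) \<Rightarrow> (nat \<Rightarrow> real) \<Rightarrow> (nat \<Rightarrow> real)" where
  "block_rotation B \<theta> x = (\<lambda>i. if i < 2 * B then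
      (if even i then cos (\<theta> (i div 2)) * x i - sin (\<theta> (i div 2)) * x (Suc i)
       else sin (\<theta> (i div 2)) * x (i - 1) + cos (\<theta> (i div 2)) * x i) else x i)"

lemma block_rotation_pair:
  assumes "b < B"
  shows "block_rotation B \<theta> x (2 * b) = cos (\<theta> b) * x (2 * b) - sin (\<theta> b) * x (Suc (2 * b))"
    and "block_rotation B \<theta> x (Suc (2 * b)) = sin (\<theta> b) * x (2 * b) + cos (\<theta> b) * x (Suc (2 * b))"
  using assms by (auto simp: block_rotation_def)

lemma block_rotation_add:
  "block_rotation B \<theta> (block_rotation B \<theta>' x) = block_rotation B (\<lambda>b. \<theta> b + \<theta>' b) x"
proof
  fix i
  show "block_rotation B \<theta> (block_rotation B \<theta>' x) i = block_rotation B (\<lambda>b. \<theta> b + \<theta>' b) x i"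
  proof (cases "i < 2 * B")
    case True
    define b where "b = i div 2"
    have b: "b < B" and "i = 2 * b \<or> i = Suc (2 * b)" using True unfolding b_def by presburger+
    moreover
    let ?c = "cos (\<theta> b)" and ?s = "sin (\<theta> b)" and ?c' = "cos (\<theta>' b)" and ?s' = "sin (\<theta>' b)"
    have "cos (\<theta> b + \<theta>' b) = ?c * ?c' - ?s * ?s'" "sin (\<theta> b + \<theta>' b) = ?s * ?c' + ?c * ?s'"
      by (simp_all add: cos_add sin_add)
    ultimately show ?thesis
      by (elim disjE) (simp_all only: block_rotation_pair[OF b], simp_all add: algebra_simps)
  next
    case False
    then show ?thesis by (simp add: block_rotation_def)
  qed
qed

lemma block_rotation_zero: "block_rotation B (\<lambda>_. 0) x = x"
  by (auto simp: block_rotation_def)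

lemma block_rotation_mod_2pi:
  assumes "\<And>b. b < B \<Longrightarrow> \<exists>m::int. \<theta> b = \<theta>' b + 2 * pi * of_int m"
  shows "block_rotation B \<theta> = block_rotation B \<theta>'"
proof -
  have "cos (\<theta> b) = cos (\<theta>' b) \<and> sin (\<theta> b) = sin (\<theta>' b)" if "b < B" for b
    using assms[OF that] by (auto simp: cos_add sin_add)
  then show ?thesis
    unfolding block_rotation_def by (intro ext) (simp add: less_mult_imp_div_less)
qed

lemma block_rotation_Rn: "x \<in> Rn n \<Longrightarrow> 2 * B \<le> n \<Longrightarrow> block_rotation B \<theta> x \<in> Rn n"
  by (auto simp: Rn_def block_rotation_def)

lemma sqdist_split_pairs:
  assumes "2 * B \<le> n"
  shows "sqdist n x y = (\<Sum>b<B. (x (2 * b) - y (2 * b))^2 + (x (Suc (2 * b)) - y (Suc (2 * b)))^2)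
                        + (\<Sum>i\<in>{2 * B..<n}. (x i - y i)^2)"
proof -
  have pairs: "(\<Sum>i<2 * B. h i) = (\<Sum>b<B. h (2 * b) + h (Suc (2 * b)))" for h :: "nat \<Rightarrow> real"
    by (induction B) (auto simp: algebra_simps)
  have "{..<n} = {..<2 * B} \<union> {2 * B..<n}" using assms by auto
  then show ?thesis
    unfolding sqdist_def
    by (simp add: sum.union_disjoint[of "{..<2 * B}" "{2 * B..<n}"] ivl_disj_int pairs)
qed

lemma block_rotation_isometry:
  assumes "2 * B \<le> n"
  shows "sqdist n (block_rotation B \<theta> x) (block_rotation B \<theta> y) = sqdist n x y"
proof -
  let ?R = "block_rotation B \<theta>"
  have pair: "(?R x (2 * b) - ?R y (2 * b))^2 + (?R x (Suc (2 * b)) - ?R y (Suc (2 * b)))^2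
      = (x (2 * b) - y (2 * b))^2 + (x (Suc (2 * b)) - y (Suc (2 * b)))^2" if "b < B" for b
  proof -
    have rot: "(c * a - s * d)^2 + (s * a + c * d)^2 = (c^2 + s^2) * (a^2 + d^2)" for c s a d :: real
      by (simp add: power2_eq_square algebra_simps)
    show ?thesis
      unfolding block_rotation_pair[OF that] using rot[of "cos (\<theta> b)" "x (2 * b) - y (2 * b)"
        "sin (\<theta> b)" "x (Suc (2 * b)) - y (Suc (2 * b))"] by (simp add: algebra_simps)
  qed
  have "?R x i = x i" "?R y i = y i" if "i \<in> {2 * B..<n}" for i
    using that by (simp_all add: block_rotation_def)
  then show ?thesis
    unfolding sqdist_split_pairs[OF assms] using pair by simp
qed

definition rotation_base :: "nat \<Rightarrow> (nat \<Rightarrow> real) \<Rightarrow> (nat \<Rightarrow> real)" where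
  "rotation_base B r = (\<lambda>i. if i < 2 * B \<and> even i then r (i div 2) else 0)"

lemma rotation_base_Rn: "2 * B \<le> n \<Longrightarrow> rotation_base B r \<in> Rn n"
  by (auto simp: Rn_def rotation_base_def)

lemma sqdist_block_rotation_base:
  assumes "2 * B \<le> n"
  shows "sqdist n (block_rotation B \<theta> (rotation_base B r)) (block_rotation B \<theta>' (rotation_base B r))
       = (\<Sum>b<B. (r b)^2 * (2 - 2 * cos (\<theta> b - \<theta>' b)))"
proof -
  let ?x = "rotation_base B r"
  have pair: "(block_rotation B \<theta> ?x (2 * b) - block_rotation B \<theta>' ?x (2 * b))^2
      + (block_rotation B \<theta> ?x (Suc (2 * b)) - block_rotation B \<theta>' ?x (Suc (2 * b)))^2
      = (r b)^2 * (2 - 2 * cos (\<theta> b - \<theta>' b))" if "b < B" for b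
  proof -
    have chord: "(c * t - c' * t)^2 + (s * t - s' * t)^2
        = t^2 * ((c^2 + s^2) + (c'^2 + s'^2) - 2 * (c * c' + s * s'))" for c s c' s' t :: real
      by (simp add: power2_eq_square algebra_simps)
    have "?x (2 * b) = r b" "?x (Suc (2 * b)) = 0"
      using that by (simp_all add: rotation_base_def)
    then show ?thesis
      unfolding block_rotation_pair[OF that] cos_diff by (simp add: chord)
  qed
  have "block_rotation B \<theta> ?x i = 0" "block_rotation B \<theta>' ?x i = 0" if "i \<in> {2 * B..<n}" for i
    using that by (simp_all add: block_rotation_def rotation_base_def)
  then show ?thesis
    unfolding sqdist_split_pairs[OF assms] using pair by simp
qed

section \<open>Orbits of \<open>p\<close>-tori\<close>

lemma group_actionI:
  assumes "group G"
    and "\<And>g. g \<in> carrier G \<Longrightarrow> \<rho> g \<in> extensional E"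
    and "\<And>g x. g \<in> carrier G \<Longrightarrow> x \<in> E \<Longrightarrow> \<rho> g x \<in> E"
    and mult: "\<And>g h x. g \<in> carrier G \<Longrightarrow> h \<in> carrier G \<Longrightarrow> x \<in> E \<Longrightarrow>
                 \<rho> (g \<otimes>\<^bsub>G\<^esub> h) x = \<rho> g (\<rho> h x)"
    and one: "\<And>x. x \<in> E \<Longrightarrow> \<rho> \<one>\<^bsub>G\<^esub> x = x"
  shows "group_action G E \<rho>"
proof -
  interpret G: group G by fact
  have Bij: "\<rho> g \<in> Bij E" if g: "g \<in> carrier G" for g
  proof -
    have ig: "inv\<^bsub>G\<^esub> g \<in> carrier G" using g by simp
    have "bij_betw (\<rho> g) E E"
    proof (rule bij_betw_byWitness[where f'="\<rho> (inv\<^bsub>G\<^esub> g)"])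
      show "\<forall>x\<in>E. \<rho> (inv\<^bsub>G\<^esub> g) (\<rho> g x) = x" using mult[OF ig g] one g by simp
      show "\<forall>x\<in>E. \<rho> g (\<rho> (inv\<^bsub>G\<^esub> g) x) = x" using mult[OF g ig] one g by simp
    qed (use assms(3) g ig in auto)
    then show ?thesis using assms(2) g by (simp add: Bij_def)
  qed
  have "\<rho> (g \<otimes>\<^bsub>G\<^esub> h) = \<rho> g \<otimes>\<^bsub>BijGroup E\<^esub> \<rho> h"
    if "g \<in> carrier G" "h \<in> carrier G" for g h
  proof -
    have "\<rho> (g \<otimes>\<^bsub>G\<^esub> h) = compose E (\<rho> g) (\<rho> h)"
      using mult[OF that] assms(2)[of "g \<otimes>\<^bsub>G\<^esub> h"] that
      by (intro ext) (auto simp: compose_def extensional_def)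
    then show ?thesis using Bij that by (simp add: BijGroup_def)
  qed
  then have "\<rho> \<in> hom G (BijGroup E)" using Bij by (auto simp: hom_def BijGroup_def)
  then show ?thesis
    by (intro group_action.intro group_hom.intro group_hom_axioms.intro assms(1) group_BijGroup)
qed

lemma group_action_conjugate:
  assumes ga: "group_action G E \<rho>" and bij: "bij_betw \<Phi> E E"
  shows "group_action G E (\<lambda>g. \<lambda>x\<in>E. \<Phi> (\<rho> g (inv_into E \<Phi> x)))"
proof (rule group_actionI)
  interpret group_action G E \<rho> by fact
  have inv: "inv_into E \<Phi> x \<in> E" "\<Phi> (inv_into E \<Phi> x) = x" if "x \<in> E" for x
    using bij that by (auto simp: bij_betw_def inv_into_into f_inv_into_f)
  have inv_f: "inv_into E \<Phi> (\<Phi> y) = y" and f: "\<Phi> y \<in> E" if "y \<in> E" for y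
    using bij that by (auto simp: bij_betw_def inv_into_f_f)
  have \<rho>: "\<rho> g y \<in> E" if "g \<in> carrier G" "y \<in> E" for g y
    using element_image that by blast
  show "group G" by (rule group_hom.axioms(1)[OF group_hom])
  show "(\<lambda>x\<in>E. \<Phi> (\<rho> g (inv_into E \<Phi> x))) x \<in> E" if "g \<in> carrier G" "x \<in> E" for g x
    using that by (simp add: \<rho> inv f)
  show "(\<lambda>x\<in>E. \<Phi> (\<rho> (g \<otimes>\<^bsub>G\<^esub> h) (inv_into E \<Phi> x))) x =
        (\<lambda>x\<in>E. \<Phi> (\<rho> g (inv_into E \<Phi> x))) ((\<lambda>x\<in>E. \<Phi> (\<rho> h (inv_into E \<Phi> x))) x)"
    if "g \<in> carrier G" "h \<in> carrier G" "x \<in> E" for g h x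
    using that by (simp add: \<rho> inv inv_f f composition_rule)
  show "(\<lambda>x\<in>E. \<Phi> (\<rho> \<one>\<^bsub>G\<^esub> (inv_into E \<Phi> x))) x = x" if "x \<in> E" for x
  proof -
    have "\<rho> \<one>\<^bsub>G\<^esub> (inv_into E \<Phi> x) = inv_into E \<Phi> x"
      using id_eq_one[symmetric] inv(1)[OF that] by simp
    then show ?thesis using that inv(2) by simp
  qed
qed simp

lemma carrier_p_torus: "p \<noteq> 0 \<Longrightarrow> carrier (p_torus p \<alpha>) = (\<Pi>\<^sub>E l\<in>{..<\<alpha>}. {0..<int p})"
  by (simp add: p_torus_def carrier_integer_mod_group)

lemma mult_p_torus: "p \<noteq> 0 \<Longrightarrow> g \<otimes>\<^bsub>p_torus p \<alpha>\<^esub> h = (\<lambda>l\<in>{..<\<alpha>}. (g l + h l) mod int p)"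
  by (simp add: p_torus_def integer_mod_group_def)

lemma one_p_torus: "p \<noteq> 0 \<Longrightarrow> \<one>\<^bsub>p_torus p \<alpha>\<^esub> = (\<lambda>l\<in>{..<\<alpha>}. 0)"
  by (simp add: p_torus_def integer_mod_group_def)

lemma euclidean_sub_p_toral_if_congruent_to_orbit:
  assumes ga: "group_action (p_torus p \<alpha>) (Rn n) \<rho>"
    and iso: "\<And>g x y. g \<in> carrier (p_torus p \<alpha>) \<Longrightarrow> x \<in> Rn n \<Longrightarrow> y \<in> Rn n \<Longrightarrow>
                sqdist n (\<rho> g x) (\<rho> g y) = sqdist n x y"
    and "k \<le> n" "1 \<le> \<alpha>" "finite A" "A \<subseteq> Rn k" and x0: "x0 \<in> Rn n"
    and g: "g ` A \<subseteq> carrier (p_torus p \<alpha>)"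
    and congruent: "\<And>a a'. a \<in> A \<Longrightarrow> a' \<in> A \<Longrightarrow> sqdist n (\<rho> (g a) x0) (\<rho> (g a') x0) = sqdist n a a'"
  shows "euclidean_sub_p_toral p k A"
proof -
  interpret group_action "p_torus p \<alpha>" "Rn n" \<rho> by fact
  have \<rho>: "\<rho> h z \<in> Rn n" if "h \<in> carrier (p_torus p \<alpha>)" "z \<in> Rn n" for h z
    using element_image that by blast
  have An: "A \<subseteq> Rn n" using assms(3,6) by (auto simp: Rn_def)
  have "(\<lambda>a. \<rho> (g a) x0) ` A \<subseteq> Rn n" using g x0 \<rho> by auto
  then obtain \<Phi> where bij: "bij_betw \<Phi> (Rn n) (Rn n)"
    and \<Phi>_iso: "\<forall>x\<in>Rn n. \<forall>z\<in>Rn n. sqdist n (\<Phi> x) (\<Phi> z) = sqdist n x z"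
    and \<Phi>_orbit: "\<forall>a\<in>A. \<Phi> (\<rho> (g a) x0) = a"
    using finite_isometry_extension[OF assms(5) An _ congruent] by blast
  define \<psi> where "\<psi> h = (\<lambda>x\<in>Rn n. \<Phi> (\<rho> h (inv_into (Rn n) \<Phi> x)))" for h
  have inv: "inv_into (Rn n) \<Phi> x \<in> Rn n" "\<Phi> (inv_into (Rn n) \<Phi> x) = x" if "x \<in> Rn n" for x
    using bij that by (auto simp: bij_betw_def inv_into_into f_inv_into_f)
  have \<Phi>: "\<Phi> x \<in> Rn n" "inv_into (Rn n) \<Phi> (\<Phi> x) = x" if "x \<in> Rn n" for x
    using bij that by (auto simp: bij_betw_def inv_into_f_f)
  have "group_action (p_torus p \<alpha>) (Rn n) \<psi>"
    unfolding \<psi>_def by (rule group_action_conjugate[OF ga bij])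
  moreover have "\<forall>h\<in>carrier (p_torus p \<alpha>). \<forall>x\<in>Rn n. \<forall>y\<in>Rn n. edist n (\<psi> h x) (\<psi> h y) = edist n x y"
  proof (intro ballI)
    fix h x y assume h: "h \<in> carrier (p_torus p \<alpha>)" and x: "x \<in> Rn n" and y: "y \<in> Rn n"
    have "sqdist n (\<psi> h x) (\<psi> h y) = sqdist n (inv_into (Rn n) \<Phi> x) (inv_into (Rn n) \<Phi> y)"
      using x y \<Phi>_iso iso[OF h] by (simp add: \<psi>_def \<rho>[OF h] inv)
    also have "\<dots> = sqdist n x y"
      using \<Phi>_iso[rule_format, OF inv(1)[OF x] inv(1)[OF y]] by (simp add: inv(2) x y)
    finally show "edist n (\<psi> h x) (\<psi> h y) = edist n x y" by (simp add: edist_eq_sqrt_sqdist)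
  qed
  moreover have "A \<subseteq> orbit (p_torus p \<alpha>) \<psi> (\<Phi> x0)"
  proof
    fix a assume a: "a \<in> A"
    have "\<psi> (g a) (\<Phi> x0) = \<Phi> (\<rho> (g a) x0)" using \<Phi>[OF x0] by (simp add: \<psi>_def)
    also have "\<dots> = a" using \<Phi>_orbit a by simp
    moreover have "g a \<in> carrier (p_torus p \<alpha>)" using g a by blast
    ultimately show "a \<in> orbit (p_torus p \<alpha>) \<psi> (\<Phi> x0)"
      unfolding orbit_def by force
  qed
  ultimately show ?thesis
    unfolding euclidean_sub_p_toral_def using assms(3,4) \<Phi>(1)[OF x0] by blast
qed

section \<open>Distance functions realizable by a \<open>p\<close>-torus\<close>

text \<open>The squared distance between the \<open>p\<close>-th roots of unity \<open>exp (2\<pi>is/p)\<close> and \<open>1\<close>.\<close>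
definition chord_sq :: "nat \<Rightarrow> int \<Rightarrow> real" where
  "chord_sq p s = 2 - 2 * cos (2 * pi * of_int s / real p)"

text \<open>Read as characters of a \<open>p\<close>-torus, the integer-valued maps \<open>c b\<close> make these the squared
  distances within an orbit of the torus rotating \<open>B\<close> coordinate planes.\<close>
definition torus_realizable :: "nat \<Rightarrow> 'a set \<Rightarrow> ('a \<Rightarrow> 'a \<Rightarrow> real) \<Rightarrow> bool" where
  "torus_realizable p A D \<longleftrightarrow>
     (\<exists>(B::nat) (c::nat \<Rightarrow> 'a \<Rightarrow> int) (w::nat \<Rightarrow> real). (\<forall>b<B. 0 \<le> w b) \<and>
        (\<forall>a\<in>A. \<forall>a'\<in>A. D a a' = (\<Sum>b<B. w b * chord_sq p (c b a - c b a'))))"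

lemma chord_sq_0 [simp]: "chord_sq p 0 = 0"
  by (simp add: chord_sq_def)

lemma chord_sq_minus: "chord_sq p (- s) = chord_sq p s"
  by (simp add: chord_sq_def)

lemma chord_sq_1_pos:
  assumes "2 \<le> p" shows "0 < chord_sq p 1"
proof -
  have "cos (2 * pi / real p) < cos 0"
    using assms by (intro cos_monotone_0_pi) (auto simp: field_simps)
  then show ?thesis by (simp add: chord_sq_def)
qed

lemma torus_realizable_cong:
  assumes "torus_realizable p A D" "\<And>a a'. a \<in> A \<Longrightarrow> a' \<in> A \<Longrightarrow> D a a' = D' a a'"
  shows "torus_realizable p A D'"
proof -
  obtain B :: nat and c w where "\<forall>b<B. 0 \<le> (w b :: real)"
    and "\<forall>a\<in>A. \<forall>a'\<in>A. D a a' = (\<Sum>b<B. w b * chord_sq p (c b a - c b a'))"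
    using assms(1) unfolding torus_realizable_def by blast
  then show ?thesis
    unfolding torus_realizable_def using assms(2) by (intro exI[of _ B] exI[of _ c] exI[of _ w]) simp
qed

lemma torus_realizable_symmetric:
  assumes "torus_realizable p A D" "a \<in> A" "a' \<in> A"
  shows "D a a' = D a' a"
proof -
  obtain B :: nat and c w
    where "\<forall>a\<in>A. \<forall>a'\<in>A. D a a' = (\<Sum>b<B. w b * chord_sq p (c b a - c b a'))"
    using assms(1) unfolding torus_realizable_def by blast
  then show ?thesis
    using assms(2,3) chord_sq_minus[of p "c _ a - c _ a'"] by simp
qed

lemma torus_realizable_diagonal:
  "torus_realizable p A D \<Longrightarrow> a \<in> A \<Longrightarrow> D a a = 0"
  unfolding torus_realizable_def by auto

lemma torus_realizable_zero: "torus_realizable p A (\<lambda>_ _. 0)"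
  unfolding torus_realizable_def by (rule exI[of _ 0]) auto

lemma torus_realizable_chord_sq: "torus_realizable p A (\<lambda>a a'. chord_sq p (c a - c a'))"
  unfolding torus_realizable_def
  by (intro exI[of _ 1] exI[of _ "\<lambda>_. c"] exI[of _ "\<lambda>_. 1"]) auto

lemma torus_realizable_scale:
  assumes "torus_realizable p A D" "0 \<le> t"
  shows "torus_realizable p A (\<lambda>a a'. t * D a a')"
proof -
  obtain B :: nat and c w where "\<forall>b<B. 0 \<le> (w b :: real)"
    and "\<forall>a\<in>A. \<forall>a'\<in>A. D a a' = (\<Sum>b<B. w b * chord_sq p (c b a - c b a'))"
    using assms(1) unfolding torus_realizable_def by blast
  then show ?thesis unfolding torus_realizable_def
    by (intro exI[of _ B] exI[of _ c] exI[of _ "\<lambda>b. t * w b"])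
       (simp add: assms(2) sum_distrib_left mult.assoc)
qed

lemma torus_realizable_add:
  assumes "torus_realizable p A D" "torus_realizable p A D'"
  shows "torus_realizable p A (\<lambda>a a'. D a a' + D' a a')"
proof -
  obtain B1 :: nat and c1 w1 where w1: "\<forall>b<B1. 0 \<le> (w1 b :: real)"
    and D: "\<forall>a\<in>A. \<forall>a'\<in>A. D a a' = (\<Sum>b<B1. w1 b * chord_sq p (c1 b a - c1 b a'))"
    using assms(1) unfolding torus_realizable_def by blast
  obtain B2 :: nat and c2 w2 where w2: "\<forall>b<B2. 0 \<le> (w2 b :: real)"
    and D': "\<forall>a\<in>A. \<forall>a'\<in>A. D' a a' = (\<Sum>b<B2. w2 b * chord_sq p (c2 b a - c2 b a'))"
    using assms(2) unfolding torus_realizable_def by blast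
  define c where "c b = (if b < B1 then c1 b else c2 (b - B1))" for b
  define w where "w b = (if b < B1 then w1 b else w2 (b - B1))" for b
  have split: "(\<Sum>b<B1 + B2. f b) = (\<Sum>b<B1. f b) + (\<Sum>b<B2. f (B1 + b))" for f :: "nat \<Rightarrow> real"
    by (induction B2) (auto simp: add.assoc)
  have "\<forall>b<B1 + B2. 0 \<le> w b" using w1 w2 by (auto simp: w_def)
  moreover have "\<forall>a\<in>A. \<forall>a'\<in>A.
      D a a' + D' a a' = (\<Sum>b<B1 + B2. w b * chord_sq p (c b a - c b a'))"
    using D D' by (simp add: split c_def w_def)
  ultimately show ?thesis unfolding torus_realizable_def by blast
qed

lemma torus_realizable_sum:
  assumes "finite I" "\<And>i. i \<in> I \<Longrightarrow> torus_realizable p A (D i)"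
  shows "torus_realizable p A (\<lambda>a a'. \<Sum>i\<in>I. D i a a')"
  using assms
  by (induction I rule: finite_induct) (auto intro: torus_realizable_add torus_realizable_zero)

definition cut_semimetric :: "'a set \<Rightarrow> 'a \<Rightarrow> 'a \<Rightarrow> real" where
  "cut_semimetric S a a' = (if (a \<in> S) = (a' \<in> S) then 0 else 1)"

lemma torus_realizable_cut_semimetric:
  assumes "2 \<le> p"
  shows "torus_realizable p A (cut_semimetric S)"
proof -
  define ind where "ind a = (if a \<in> S then 1 else (0::int))" for a
  have "cut_semimetric S a a' = (1 / chord_sq p 1) * chord_sq p (ind a - ind a')" for a a'
    using chord_sq_1_pos[OF assms] chord_sq_minus[of p 1]
    by (auto simp: cut_semimetric_def ind_def)
  then show ?thesis
    using torus_realizable_scale[OF torus_realizable_chord_sq, of "1 / chord_sq p 1" p A ind]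
      chord_sq_1_pos[OF assms] by (simp add: torus_realizable_cong)
qed

lemma cut_semimetric_combination:
  fixes \<nu> :: "'a \<Rightarrow> 'a \<Rightarrow> real"
  assumes A: "finite A" "a \<in> A" "a' \<in> A" "a \<noteq> a'"
    and sym: "\<And>x y. x \<in> A \<Longrightarrow> y \<in> A \<Longrightarrow> \<nu> x y = \<nu> y x" and diag: "\<And>x. \<nu> x x = 0"
  shows "(\<Sum>x\<in>A. (K / 2 - 2 * (\<Sum>y\<in>A. \<nu> x y)) * cut_semimetric {x} a a')
       + (\<Sum>x\<in>A. \<Sum>y\<in>A. \<nu> x y * cut_semimetric {x, y} a a') = K - 4 * \<nu> a a'"
proof -
  define U where "U z = (if z = a \<or> z = a' then 1 else 0 :: real)" for z
  define R where "R x = (\<Sum>y\<in>A. \<nu> x y)" for x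
  have pick: "(\<Sum>x\<in>A. U x * f x) = f a + f a'" for f
  proof -
    have "(\<Sum>x\<in>A. U x * f x) = (\<Sum>x\<in>A. if x \<in> {a, a'} then f x else 0)"
      by (rule sum.cong) (auto simp: U_def)
    also have "\<dots> = (\<Sum>x\<in>A \<inter> {a, a'}. f x)"
      using A(1) by (simp add: sum.inter_restrict)
    also have "A \<inter> {a, a'} = {a, a'}" using A by auto
    finally show ?thesis using A(4) by simp
  qed
  \<comment> \<open>\<open>{x, y}\<close> separates \<open>a\<close> from \<open>a'\<close> iff exactly one of \<open>x\<close>, \<open>y\<close> lies in \<open>{a, a'}\<close>.\<close>
  have inner: "(\<Sum>y\<in>A. \<nu> x y * cut_semimetric {x, y} a a')
      = U x * R x + (\<nu> x a + \<nu> x a') - 2 * U x * (\<nu> x a + \<nu> x a')" for x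
  proof -
    have "(\<Sum>y\<in>A. \<nu> x y * cut_semimetric {x, y} a a')
        = (\<Sum>y\<in>A. U x * \<nu> x y + U y * \<nu> x y - 2 * U x * (U y * \<nu> x y))"
      by (rule sum.cong) (use A(4) diag in \<open>auto simp: cut_semimetric_def U_def\<close>)
    also have "\<dots> = U x * R x + (\<Sum>y\<in>A. U y * \<nu> x y) - 2 * U x * (\<Sum>y\<in>A. U y * \<nu> x y)"
      by (simp add: sum.distrib sum_subtractf sum_distrib_left R_def)
    also have "\<dots> = U x * R x + (\<nu> x a + \<nu> x a') - 2 * U x * (\<nu> x a + \<nu> x a')"
      by (simp only: pick)
    finally show ?thesis .
  qed
  have "cut_semimetric {x} a a' = U x" for x
    using A(4) by (auto simp: cut_semimetric_def U_def)
  then have singles: "(\<Sum>x\<in>A. (K / 2 - 2 * R x) * cut_semimetric {x} a a') = K - 2 * (R a + R a')"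
    using pick[of "\<lambda>x. K / 2 - 2 * R x"] by (simp add: mult.commute)
  have column: "(\<Sum>x\<in>A. \<nu> x b) = R b" if "b \<in> A" for b
    unfolding R_def using sym that by (intro sum.cong) auto
  have cross: "(\<Sum>x\<in>A. 2 * U x * (\<nu> x a + \<nu> x a')) = 2 * (\<nu> a a' + \<nu> a' a)"
    using pick[of "\<lambda>x. 2 * (\<nu> x a + \<nu> x a')"] diag by (simp add: algebra_simps)
  have "(\<Sum>x\<in>A. \<Sum>y\<in>A. \<nu> x y * cut_semimetric {x, y} a a')
      = 2 * (R a + R a') - 2 * (\<nu> a a' + \<nu> a' a)"
  proof -
    have "(\<Sum>x\<in>A. \<Sum>y\<in>A. \<nu> x y * cut_semimetric {x, y} a a')
        = (\<Sum>x\<in>A. U x * R x) + ((\<Sum>x\<in>A. \<nu> x a) + (\<Sum>x\<in>A. \<nu> x a'))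
          - (\<Sum>x\<in>A. 2 * U x * (\<nu> x a + \<nu> x a'))"
      unfolding inner by (simp only: sum.distrib sum_subtractf)
    then show ?thesis using pick[of R] column[OF A(2)] column[OF A(3)] cross by simp
  qed
  then show ?thesis
    using singles sym[OF A(2,3)] by (simp add: R_def)
qed

lemma torus_realizable_near_constant:
  assumes A: "finite A" and p: "2 \<le> p"
    and sym: "\<And>a a'. a \<in> A \<Longrightarrow> a' \<in> A \<Longrightarrow> E a a' = E a' a"
    and diag: "\<And>a. a \<in> A \<Longrightarrow> E a a = 0"
    and near: "\<And>a a'. a \<in> A \<Longrightarrow> a' \<in> A \<Longrightarrow> a \<noteq> a' \<Longrightarrow> \<bar>E a a' - \<beta>\<bar> \<le> \<gamma>"
    and small: "(2 * real (card A) - 3) * \<gamma> \<le> \<beta>" and "0 \<le> \<gamma>"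
  shows "torus_realizable p A E"
proof -
  define K where "K = \<beta> + \<gamma>"
  define \<nu> where "\<nu> x y = (if x = y then 0 else (K - E x y) / 4)" for x y
  define \<mu> where "\<mu> x = K / 2 - 2 * (\<Sum>y\<in>A. \<nu> x y)" for x
  have \<nu>_nonneg: "0 \<le> \<nu> x y" if "x \<in> A" "y \<in> A" for x y
    using near[OF that] by (auto simp: \<nu>_def K_def abs_le_iff)
  \<comment> \<open>each row of \<open>\<nu>\<close> has at most \<open>card A - 1\<close> entries, each at most \<open>\<gamma> / 2\<close>\<close>
  have "0 \<le> \<mu> x" if x: "x \<in> A" for x
  proof -
    have "(\<Sum>y\<in>A. \<nu> x y) = (\<Sum>y\<in>A - {x}. \<nu> x y)"
      using A x by (simp add: sum.remove \<nu>_def)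
    also have "\<dots> \<le> (\<Sum>y\<in>A - {x}. \<gamma> / 2)"
    proof (rule sum_mono)
      fix y assume y: "y \<in> A - {x}"
      then have "\<beta> - E x y \<le> \<gamma>" using near[OF x, of y] by (auto simp: abs_le_iff)
      then show "\<nu> x y \<le> \<gamma> / 2" using y by (auto simp: \<nu>_def K_def)
    qed
    also have "\<dots> = (real (card A) - 1) * \<gamma> / 2"
      by (simp add: card.remove[OF A x])
    finally show ?thesis using small by (simp add: \<mu>_def K_def algebra_simps)
  qed
  then have "torus_realizable p A (\<lambda>a a'. \<Sum>x\<in>A. \<mu> x * cut_semimetric {x} a a')"
    by (intro torus_realizable_sum[OF A] torus_realizable_scale[OF torus_realizable_cut_semimetric[OF p]])
  moreover have "torus_realizable p A (\<lambda>a a'. \<Sum>x\<in>A. \<Sum>y\<in>A. \<nu> x y * cut_semimetric {x, y} a a')"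
    using \<nu>_nonneg
    by (intro torus_realizable_sum[OF A] torus_realizable_scale[OF torus_realizable_cut_semimetric[OF p]])
  ultimately have "torus_realizable p A (\<lambda>a a'. (\<Sum>x\<in>A. \<mu> x * cut_semimetric {x} a a')
      + (\<Sum>x\<in>A. \<Sum>y\<in>A. \<nu> x y * cut_semimetric {x, y} a a'))"
    by (rule torus_realizable_add)
  then show ?thesis
  proof (rule torus_realizable_cong)
    fix a a' assume a: "a \<in> A" and a': "a' \<in> A"
    show "(\<Sum>x\<in>A. \<mu> x * cut_semimetric {x} a a')
        + (\<Sum>x\<in>A. \<Sum>y\<in>A. \<nu> x y * cut_semimetric {x, y} a a') = E a a'"
    proof (cases "a = a'")
      case True
      then show ?thesis using diag[OF a] by (simp add: cut_semimetric_def)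
    next
      case False
      have "\<nu> x y = \<nu> y x" if "x \<in> A" "y \<in> A" for x y
        using sym[OF that] by (simp add: \<nu>_def)
      then show ?thesis
        using cut_semimetric_combination[OF A a a' False, of \<nu> K] False
        by (simp add: \<mu>_def \<nu>_def diff_divide_distrib)
    qed
  qed
qed

definition torus_angle :: "nat \<Rightarrow> nat \<Rightarrow> (nat \<Rightarrow> nat \<Rightarrow> int) \<Rightarrow> (nat \<Rightarrow> int) \<Rightarrow> nat \<Rightarrow> real" where
  "torus_angle p \<alpha> C g b = 2 * pi * of_int (\<Sum>l<\<alpha>. C b l * g l) / real p"

lemma torus_angle_mult:
  assumes "p \<noteq> 0"
  shows "\<exists>m::int. torus_angle p \<alpha> C (g \<otimes>\<^bsub>p_torus p \<alpha>\<^esub> h) b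
                   = torus_angle p \<alpha> C g b + torus_angle p \<alpha> C h b + 2 * pi * of_int m"
proof -
  define m where "m = (\<Sum>l<\<alpha>. C b l * ((g l + h l) div int p))"
  have "(\<Sum>l<\<alpha>. C b l * (g \<otimes>\<^bsub>p_torus p \<alpha>\<^esub> h) l)
      = (\<Sum>l<\<alpha>. C b l * g l + C b l * h l - int p * (C b l * ((g l + h l) div int p)))"
    unfolding mult_p_torus[OF assms]
    by (rule sum.cong) (auto simp: minus_div_mult_eq_mod[symmetric] algebra_simps)
  also have "\<dots> = (\<Sum>l<\<alpha>. C b l * g l) + (\<Sum>l<\<alpha>. C b l * h l) - int p * m"
    by (simp add: m_def sum_subtractf sum.distrib sum_distrib_left)
  finally have sum: "(\<Sum>l<\<alpha>. C b l * (g \<otimes>\<^bsub>p_torus p \<alpha>\<^esub> h) l)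
      = (\<Sum>l<\<alpha>. C b l * g l) + (\<Sum>l<\<alpha>. C b l * h l) - int p * m" .
  show ?thesis
    using assms by (intro exI[of _ "- m"]) (simp only: torus_angle_def sum, simp add: field_simps)
qed

lemma group_action_torus_rotation:
  assumes "p \<noteq> 0" "2 * B \<le> n"
  shows "group_action (p_torus p \<alpha>) (Rn n) (\<lambda>g. \<lambda>x\<in>Rn n. block_rotation B (torus_angle p \<alpha> C g) x)"
proof (rule group_actionI)
  show "group (p_torus p \<alpha>)" by (simp add: p_torus_def)
  show "(\<lambda>x\<in>Rn n. block_rotation B (torus_angle p \<alpha> C g) x) x \<in> Rn n" if "x \<in> Rn n" for g x
    using that assms(2) by (simp add: block_rotation_Rn)
  show "(\<lambda>x\<in>Rn n. block_rotation B (torus_angle p \<alpha> C (g \<otimes>\<^bsub>p_torus p \<alpha>\<^esub> h)) x) x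
      = (\<lambda>x\<in>Rn n. block_rotation B (torus_angle p \<alpha> C g) x)
          ((\<lambda>x\<in>Rn n. block_rotation B (torus_angle p \<alpha> C h) x) x)" if "x \<in> Rn n" for g h x
  proof -
    have "block_rotation B (torus_angle p \<alpha> C (g \<otimes>\<^bsub>p_torus p \<alpha>\<^esub> h))
        = block_rotation B (\<lambda>b. torus_angle p \<alpha> C g b + torus_angle p \<alpha> C h b)"
      using torus_angle_mult[OF assms(1)] by (intro block_rotation_mod_2pi) blast
    then show ?thesis using that assms(2) by (simp add: block_rotation_Rn block_rotation_add)
  qed
  show "(\<lambda>x\<in>Rn n. block_rotation B (torus_angle p \<alpha> C \<one>\<^bsub>p_torus p \<alpha>\<^esub>) x) x = x" if "x \<in> Rn n" for x
  proof -
    have "torus_angle p \<alpha> C \<one>\<^bsub>p_torus p \<alpha>\<^esub> = (\<lambda>_. 0)"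
      by (auto simp: torus_angle_def one_p_torus[OF assms(1)])
    then show ?thesis using that by (simp add: block_rotation_zero)
  qed
qed simp

lemma euclidean_sub_p_toral_if_realizable:
  assumes p: "2 \<le> p" and A: "finite A" "A \<subseteq> Rn k" and realizable: "torus_realizable p A (sqdist k)"
  shows "euclidean_sub_p_toral p k A"
proof -
  obtain B :: nat and c w where w: "\<forall>b<B. 0 \<le> (w b :: real)"
    and cw: "\<forall>a\<in>A. \<forall>a'\<in>A. sqdist k a a' = (\<Sum>b<B. w b * chord_sq p (c b a - c b a'))"
    using realizable unfolding torus_realizable_def by blast
  obtain idx where idx: "bij_betw idx A {..<card A}"
    using A(1) by (metis atLeast0LessThan ex_bij_betw_finite_nat)
  \<comment> \<open>The torus is \<open>(\<int>\<^sub>p)\<^sup>\<alpha>\<close> with one generator \<open>e a\<close> per point \<open>a\<close> (plus a spare one, so that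
    \<open>\<alpha> \<ge> 1\<close> even if \<open>A = {}\<close>), and \<open>c b\<close> becomes the character taking the value \<open>c b a\<close> on \<open>e a\<close>.\<close>
  define \<alpha> where "\<alpha> = Suc (card A)"
  define C where "C b l = (if l < card A then c b (inv_into A idx l) else 0)" for b l
  define e where "e a = (\<lambda>l\<in>{..<\<alpha>}. if l = idx a then (1::int) else 0)" for a
  define n where "n = max k (2 * B)"
  define \<rho> where "\<rho> g = (\<lambda>x\<in>Rn n. block_rotation B (torus_angle p \<alpha> C g) x)" for g
  define x0 where "x0 = rotation_base B (\<lambda>b. sqrt (w b))"
  have n: "k \<le> n" "2 * B \<le> n" by (auto simp: n_def)
  have x0: "x0 \<in> Rn n" using n by (simp add: x0_def rotation_base_Rn)
  have e_angle: "torus_angle p \<alpha> C (e a) b = 2 * pi * of_int (c b a) / real p" if "a \<in> A" for a b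
  proof -
    have "idx a < card A" "inv_into A idx (idx a) = a"
      using idx that by (auto simp: bij_betw_def inv_into_f_f)
    then have "(\<Sum>l<\<alpha>. C b l * e a l) = c b a"
      by (simp add: e_def \<alpha>_def C_def if_distrib[where f="\<lambda>x. _ * x"] cong: if_cong)
    then show ?thesis by (simp add: torus_angle_def)
  qed
  show ?thesis
  proof (rule euclidean_sub_p_toral_if_congruent_to_orbit[OF _ _ n(1) _ A x0])
    show "group_action (p_torus p \<alpha>) (Rn n) \<rho>"
      unfolding \<rho>_def using p n(2) by (intro group_action_torus_rotation) auto
    show "sqdist n (\<rho> g x) (\<rho> g y) = sqdist n x y" if "x \<in> Rn n" "y \<in> Rn n" for g x y
      using that n(2) by (simp add: \<rho>_def block_rotation_isometry)
    have "e a \<in> (\<Pi>\<^sub>E l\<in>{..<\<alpha>}. {0..<int p})" for a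
      unfolding e_def using p by (subst restrict_PiE_iff) auto
    then show "e ` A \<subseteq> carrier (p_torus p \<alpha>)"
      using p by (auto simp: carrier_p_torus)
    show "sqdist n (\<rho> (e a) x0) (\<rho> (e a') x0) = sqdist n a a'" if "a \<in> A" "a' \<in> A" for a a'
    proof -
      have "sqdist n (\<rho> (e a) x0) (\<rho> (e a') x0) = (\<Sum>b<B. w b * chord_sq p (c b a - c b a'))"
        using x0 n(2) w that
        by (simp add: \<rho>_def x0_def sqdist_block_rotation_base e_angle chord_sq_def
            diff_divide_distrib algebra_simps)
      also have "\<dots> = sqdist k a a'" using cw that by simp
      also have "\<dots> = sqdist n a a'"
        using that A(2) n(1) by (intro sqdist_Rn_mono[symmetric]) auto
      finally show ?thesis .
    qed
  qed (simp add: \<alpha>_def)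
qed

section \<open>Approximation by squared chords\<close>

lemma cos_quartic_bound: "\<bar>2 - 2 * cos x - x^2\<bar> \<le> x^4 / (12::real)"
proof -
  obtain t where t: "cos x = (\<Sum>m<4. cos_coeff m * x ^ m) + cos (t + 1/2 * real 4 * pi) / fact 4 * x ^ 4"
    using Maclaurin_cos_expansion[of x 4] by blast
  have "\<not> 2 dvd (3::nat)" by presburger
  then have "(\<Sum>m<4. cos_coeff m * x ^ m) = 1 - x^2 / 2"
    by (simp add: cos_coeff_def eval_nat_numeral)
  moreover have "(fact 4 :: real) = 24"
    by (simp add: numeral_eq_Suc)
  ultimately have "2 - 2 * cos x - x^2 = - (cos t * x^4 / 12)"
    using t by simp
  moreover have "\<bar>cos t * x^4\<bar> \<le> x^4"
    by (simp add: abs_mult mult_left_le_one_le)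
  ultimately show ?thesis by simp
qed

lemma chord_sq_approx:
  assumes "p \<noteq> 0"
  shows "\<bar>(real p / (2 * pi))^2 * chord_sq p s - (of_int s)^2\<bar> \<le> pi^2 * (of_int s)^4 / (3 * (real p)^2)"
proof -
  define x where "x = 2 * pi * of_int s / real p"
  have "(real p / (2 * pi))^2 * x^2 = (of_int s)^2"
    using assms by (simp add: x_def power_divide power_mult_distrib)
  moreover have "(real p / (2 * pi))^2 * (x^4 / 12) = pi^2 * (of_int s)^4 / (3 * (real p)^2)"
    using assms by (simp add: x_def power_divide power_mult_distrib field_simps eval_nat_numeral)
  moreover have "\<bar>(real p / (2 * pi))^2 * (2 - 2 * cos x - x^2)\<bar> \<le> (real p / (2 * pi))^2 * (x^4 / 12)"
    unfolding abs_mult by (intro mult_mono cos_quartic_bound) auto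
  moreover have "(real p / (2 * pi))^2 * chord_sq p s - (of_int s)^2
      = (real p / (2 * pi))^2 * (2 - 2 * cos x - x^2)"
    unfolding chord_sq_def x_def[symmetric] using calculation(1) by (simp add: algebra_simps)
  ultimately show ?thesis by simp
qed

lemma abs_square_diff_le:
  fixes u d e :: real
  assumes "\<bar>u - d\<bar> \<le> e"
  shows "\<bar>u^2 - d^2\<bar> \<le> e * (2 * \<bar>d\<bar> + e)"
proof -
  have "\<bar>u^2 - d^2\<bar> = \<bar>u - d\<bar> * \<bar>(u - d) + 2 * d\<bar>"
    by (simp add: abs_mult[symmetric] power2_eq_square algebra_simps)
  also have "\<dots> \<le> e * (2 * \<bar>d\<bar> + e)"
    using assms by (intro mult_mono) (auto simp: abs_le_iff)
  finally show ?thesis .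
qed

lemma chord_sq_approx_rescaled:
  assumes "p \<noteq> 0" "0 < M" "0 < \<eta>" "\<bar>of_int s\<bar> \<le> S"
    and p_large: "pi * S^2 \<le> real p * (M * sqrt (3 * \<eta> / 2))"
  shows "\<bar>(real p / (2 * pi * M))^2 * chord_sq p s - (of_int s / M)^2\<bar> \<le> \<eta> / 2"
proof -
  have "(real p / (2 * pi * M))^2 * chord_sq p s - (of_int s / M)^2
      = ((real p / (2 * pi))^2 * chord_sq p s - (of_int s)^2) / M^2"
    using assms(2) by (simp add: field_simps)
  then have "\<bar>(real p / (2 * pi * M))^2 * chord_sq p s - (of_int s / M)^2\<bar>
      = \<bar>(real p / (2 * pi))^2 * chord_sq p s - (of_int s)^2\<bar> / M^2"
    by (simp add: abs_divide)
  also have "\<dots> \<le> pi^2 * (of_int s)^4 / (3 * (real p)^2) / M^2"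
    by (intro divide_right_mono chord_sq_approx assms(1)) simp
  also have "\<dots> \<le> pi^2 * S^4 / (3 * (real p)^2) / M^2"
  proof -
    have "\<bar>of_int s\<bar>^4 \<le> S^4" using assms(4) by (intro power_mono) auto
    then show ?thesis by (intro divide_right_mono mult_left_mono) (auto simp: power_even_abs)
  qed
  also have "\<dots> \<le> \<eta> / 2"
  proof -
    have "(pi * S^2)^2 \<le> (real p * (M * sqrt (3 * \<eta> / 2)))^2"
      using p_large by (rule power_mono) simp
    then have "pi^2 * S^4 \<le> (real p)^2 * M^2 * (3 * \<eta> / 2)"
      using assms(3) by (simp add: power_mult_distrib flip: power_mult)
    then show ?thesis
      using assms(1,2) by (simp add: field_simps)
  qed
  finally show ?thesis .
qed

lemma round_diff_approx:
  fixes M x y :: real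
  assumes "0 < M"
  shows "\<bar>of_int (round (M * x) - round (M * y)) / M - (x - y)\<bar> \<le> 1 / M"
proof -
  let ?e = "\<lambda>z. of_int (round (M * z)) - M * z"
  have "\<bar>?e x - ?e y\<bar> \<le> 1"
    using of_int_round_abs_le[of "M * x"] of_int_round_abs_le[of "M * y"]
      abs_triangle_ineq4[of "?e x" "?e y"] by linarith
  then have "\<bar>of_int (round (M * x) - round (M * y)) - M * (x - y)\<bar> \<le> 1"
    by (simp add: algebra_simps)
  then show ?thesis
    using assms by (simp add: field_simps abs_divide flip: abs_mult)
qed

lemma eventually_torus_realizable_approx_square_diff:
  fixes t :: "'a \<Rightarrow> real"
  assumes A: "finite A" and \<eta>: "0 < \<eta>"
  shows "eventually (\<lambda>p. \<exists>D. torus_realizable p A D \<and>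
           (\<forall>a\<in>A. \<forall>a'\<in>A. \<bar>D a a' - (t a - t a')^2\<bar> \<le> \<eta>)) sequentially"
proof -
  \<comment> \<open>Round \<open>M * t\<close> to integers \<open>c\<close>; for large \<open>p\<close> the rescaled squared chord of \<open>c a - c a'\<close>
    is close to \<open>((c a - c a') / M)\<^sup>2\<close>, which is close to \<open>(t a - t a')\<^sup>2\<close>.\<close>
  define T where "T = (\<Sum>a\<in>A. \<bar>t a\<bar>)"
  define M where "M = 1 + (8 * T + 2) / \<eta>"
  define c where "c a = round (M * t a)" for a
  define S where "S = 2 * M * T + 1"
  have T: "\<bar>t a - t a'\<bar> \<le> 2 * T" if "a \<in> A" "a' \<in> A" for a a'
    using member_le_sum[of a A "\<lambda>a. \<bar>t a\<bar>"] member_le_sum[of a' A "\<lambda>a. \<bar>t a\<bar>"] that A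
    by (simp add: T_def)
  have "0 \<le> T" by (simp add: T_def sum_nonneg)
  then have M: "1 \<le> M" "1 / M * (4 * T + 1) \<le> \<eta> / 2"
    using \<eta> by (auto simp: M_def field_simps)
  have round: "\<bar>of_int (c a - c a') / M - (t a - t a')\<bar> \<le> 1 / M" for a a'
    unfolding c_def using M(1) by (intro round_diff_approx) simp
  have S: "\<bar>of_int (c a - c a')\<bar> \<le> S" if "a \<in> A" "a' \<in> A" for a a'
  proof -
    let ?u = "of_int (c a - c a') / M"
    have "\<bar>?u\<bar> \<le> \<bar>?u - (t a - t a')\<bar> + \<bar>t a - t a'\<bar>"
      using abs_triangle_ineq[of "?u - (t a - t a')" "t a - t a'"] by simp
    then have "\<bar>?u\<bar> \<le> 2 * T + 1 / M"
      using round[of a a'] T[OF that] by linarith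
    then show ?thesis using M(1) by (simp add: S_def field_simps)
  qed
  have "eventually (\<lambda>p. max 1 (pi * S^2 / (M * sqrt (3 * \<eta> / 2))) \<le> real p) sequentially"
    using filterlim_real_sequentially unfolding filterlim_at_top by blast
  then show ?thesis
  proof (rule eventually_mono)
    fix p :: nat
    assume p: "max 1 (pi * S^2 / (M * sqrt (3 * \<eta> / 2))) \<le> real p"
    define D where "D a a' = (real p / (2 * pi * M))^2 * chord_sq p (c a - c a')" for a a'
    have "torus_realizable p A D"
      unfolding D_def by (intro torus_realizable_scale torus_realizable_chord_sq) simp
    moreover have "\<bar>D a a' - (t a - t a')^2\<bar> \<le> \<eta>" if a: "a \<in> A" and a': "a' \<in> A" for a a'
    proof -
      have "\<bar>D a a' - (of_int (c a - c a') / M)^2\<bar> \<le> \<eta> / 2"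
        unfolding D_def using p M(1) \<eta> S[OF a a']
        by (intro chord_sq_approx_rescaled) (auto simp: pos_divide_le_eq)
      moreover have "\<bar>(of_int (c a - c a') / M)^2 - (t a - t a')^2\<bar>
          \<le> 1 / M * (2 * \<bar>t a - t a'\<bar> + 1 / M)"
        by (rule abs_square_diff_le[OF round])
      moreover have "\<dots> \<le> 1 / M * (4 * T + 1)"
      proof -
        have "1 / M \<le> 1" using M(1) by simp
        moreover have "2 * \<bar>t a - t a'\<bar> \<le> 4 * T" using T[OF a a'] by simp
        ultimately have "2 * \<bar>t a - t a'\<bar> + 1 / M \<le> 4 * T + 1" by simp
        then show ?thesis using M(1) by (intro mult_left_mono) auto
      qed
      ultimately show ?thesis using M(2) by linarith
    qed
    ultimately show "\<exists>D. torus_realizable p A D \<and> (\<forall>a\<in>A. \<forall>a'\<in>A. \<bar>D a a' - (t a - t a')^2\<bar> \<le> \<eta>)"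
      by blast
  qed
qed

lemma eventually_torus_realizable_approx_sqdist:
  fixes b :: "'a \<Rightarrow> nat \<Rightarrow> real"
  assumes A: "finite A" and \<eta>: "0 < \<eta>"
  shows "eventually (\<lambda>p. \<exists>D. torus_realizable p A D \<and>
           (\<forall>a\<in>A. \<forall>a'\<in>A. \<bar>D a a' - sqdist k (b a) (b a')\<bar> \<le> \<eta>)) sequentially"
proof -
  define \<epsilon> where "\<epsilon> = \<eta> / (real k + 1)"
  have \<epsilon>: "0 < \<epsilon>" "real k * \<epsilon> \<le> \<eta>" using \<eta> by (auto simp: \<epsilon>_def field_simps)
  have "eventually (\<lambda>p. \<forall>l\<in>{..<k}. \<exists>D. torus_realizable p A D \<and>
          (\<forall>a\<in>A. \<forall>a'\<in>A. \<bar>D a a' - (b a l - b a' l)^2\<bar> \<le> \<epsilon>)) sequentially"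
    using eventually_torus_realizable_approx_square_diff[OF A \<epsilon>(1)]
    by (simp add: eventually_ball_finite)
  then show ?thesis
  proof (rule eventually_mono)
    fix p
    assume "\<forall>l\<in>{..<k}. \<exists>D. torus_realizable p A D \<and>
              (\<forall>a\<in>A. \<forall>a'\<in>A. \<bar>D a a' - (b a l - b a' l)^2\<bar> \<le> \<epsilon>)"
    then obtain D where D: "\<And>l. l < k \<Longrightarrow> torus_realizable p A (D l)"
      and close: "\<And>l a a'. l < k \<Longrightarrow> a \<in> A \<Longrightarrow> a' \<in> A \<Longrightarrow> \<bar>D l a a' - (b a l - b a' l)^2\<bar> \<le> \<epsilon>"
      by (metis lessThan_iff)
    have "torus_realizable p A (\<lambda>a a'. \<Sum>l<k. D l a a')"
      using D by (intro torus_realizable_sum) auto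
    moreover have "\<bar>(\<Sum>l<k. D l a a') - sqdist k (b a) (b a')\<bar> \<le> \<eta>" if "a \<in> A" "a' \<in> A" for a a'
    proof -
      have "\<bar>(\<Sum>l<k. D l a a') - sqdist k (b a) (b a')\<bar> \<le> (\<Sum>l<k. \<bar>D l a a' - (b a l - b a' l)^2\<bar>)"
        unfolding sqdist_def sum_subtractf[symmetric] by (rule sum_abs)
      also have "\<dots> \<le> real k * \<epsilon>"
        using sum_mono[of "{..<k}" "\<lambda>l. \<bar>D l a a' - (b a l - b a' l)^2\<bar>" "\<lambda>_. \<epsilon>"] close that by simp
      finally show ?thesis using \<epsilon>(2) by linarith
    qed
    ultimately show "\<exists>D. torus_realizable p A D \<and>
        (\<forall>a\<in>A. \<forall>a'\<in>A. \<bar>D a a' - sqdist k (b a) (b a')\<bar> \<le> \<eta>)" by blast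
  qed
qed

section \<open>Affinely independent sets\<close>

lemma dual_family_exists:
  fixes V :: "'i \<Rightarrow> nat \<Rightarrow> real"
  assumes "finite I"
    and "\<forall>l. (\<forall>i<k. (\<Sum>j\<in>I. l j * V j i) = 0) \<longrightarrow> (\<forall>j\<in>I. l j = 0)"
  shows "\<exists>w. \<forall>j\<in>I. \<forall>j'\<in>I. dot k (w j) (V j') = (if j = j' then 1 else 0)"
  using assms
proof (induction I rule: finite_induct)
  case empty
  then show ?case by simp
next
  case (insert v I)
  have "\<forall>l. (\<forall>i<k. (\<Sum>j\<in>I. l j * V j i) = 0) \<longrightarrow> (\<forall>j\<in>I. l j = 0)"
  proof (intro allI impI)
    fix l assume l: "\<forall>i<k. (\<Sum>j\<in>I. l j * V j i) = 0"
    have "(\<Sum>j\<in>insert v I. (l(v := 0)) j * V j i) = (\<Sum>j\<in>I. l j * V j i)" for i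
    proof -
      have "(\<Sum>j\<in>I. (l(v := 0)) j * V j i) = (\<Sum>j\<in>I. l j * V j i)"
        using insert.hyps(2) by (intro sum.cong) auto
      then show ?thesis using insert.hyps by simp
    qed
    then have "\<forall>j\<in>insert v I. (l(v := 0)) j = 0"
      using insert.prems[rule_format, of "l(v := 0)"] l by simp
    then show "\<forall>j\<in>I. l j = 0" using insert.hyps(2) by (metis fun_upd_other insertCI)
  qed
  then obtain w' where w': "\<forall>j\<in>I. \<forall>j'\<in>I. dot k (w' j) (V j') = (if j = j' then 1 else 0)"
    using insert.IH by blast
  \<comment> \<open>\<open>z\<close> is \<open>V v\<close> minus a combination of the \<open>V j\<close>, hence nonzero; \<open>Q\<close> projects along
    the \<open>w' j\<close> onto the orthogonal complement of the \<open>V j\<close>, and \<open>Q z\<close> pairs with \<open>V v\<close> to \<open>|z|\<^sup>2\<close>.\<close>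
  define z where "z = (\<lambda>i. V v i - (\<Sum>j\<in>I. dot k (w' j) (V v) * V j i))"
  define Q where "Q x = (\<lambda>i. x i - (\<Sum>j\<in>I. dot k x (V j) * w' j i))" for x
  have "\<exists>i<k. z i \<noteq> 0"
  proof (rule ccontr)
    assume z: "\<not> (\<exists>i<k. z i \<noteq> 0)"
    define l where "l j = (if j = v then 1 else - dot k (w' j) (V v))" for j
    have "(\<Sum>j\<in>insert v I. l j * V j i) = z i" for i
    proof -
      have "(\<Sum>j\<in>I. l j * V j i) = (\<Sum>j\<in>I. - (dot k (w' j) (V v) * V j i))"
        using insert.hyps(2) by (intro sum.cong) (auto simp: l_def)
      then show ?thesis using insert.hyps by (simp add: z_def l_def sum_negf)
    qed
    then have "l v = 0" using insert.prems[rule_format, of l] z by simp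
    then show False by (simp add: l_def)
  qed
  then have D: "0 < dot k z z" using dot_self_pos by blast
  have Q_orth: "dot k (Q x) (V j) = 0" if "j \<in> I" for x j
    using w' that insert.hyps(1)
    by (simp add: Q_def dot_diff_left dot_sum_left if_distrib[where f="\<lambda>x. _ * x"] cong: if_cong)
  have Q_v: "dot k (Q z) (V v) = dot k z z"
  proof -
    have "dot k (Q z) (V v) = dot k z (V v) - (\<Sum>j\<in>I. dot k z (V j) * dot k (w' j) (V v))"
      by (simp add: Q_def dot_diff_left dot_sum_left)
    moreover have "dot k z z = dot k (V v) z - (\<Sum>j\<in>I. dot k (w' j) (V v) * dot k (V j) z)"
      by (subst (1) z_def) (simp add: dot_diff_left dot_sum_left)
    ultimately show ?thesis by (simp add: dot_commute mult.commute)
  qed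
  define u where "u = (\<lambda>i. Q z i / dot k z z)"
  have u_v: "dot k u (V v) = 1" using Q_v D by (simp add: u_def dot_divide_left)
  have u_I: "dot k u (V j) = 0" if "j \<in> I" for j using Q_orth[OF that] by (simp add: u_def dot_divide_left)
  define w where "w j = (if j = v then u else (\<lambda>i. w' j i - dot k (w' j) (V v) * u i))" for j
  have "dot k (w j) (V j') = (if j = j' then 1 else 0)" if "j \<in> insert v I" "j' \<in> insert v I" for j j'
    using that w' u_v u_I insert.hyps(2)
    by (cases "j = v") (auto simp: w_def dot_diff_left dot_scale_left)
  then show ?case by blast
qed

lemma affinely_independent_differences:
  assumes "finite A" "A \<subseteq> Rn k" "affinely_independent A" "a0 \<in> A"
  shows "\<forall>l. (\<forall>i<k. (\<Sum>j\<in>A - {a0}. l j * (j i - a0 i)) = 0) \<longrightarrow> (\<forall>j\<in>A - {a0}. l j = 0)"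
proof (intro allI impI)
  fix l assume l: "\<forall>i<k. (\<Sum>j\<in>A - {a0}. l j * (j i - a0 i)) = 0"
  define c where "c a = (if a = a0 then - (\<Sum>j\<in>A - {a0}. l j) else l a)" for a
  have "(\<Sum>j\<in>A - {a0}. c j * g j) = (\<Sum>j\<in>A - {a0}. l j * g j)" for g :: "_ \<Rightarrow> real"
    by (rule sum.cong) (auto simp: c_def)
  then have split: "(\<Sum>a\<in>A. c a * f a) = (\<Sum>j\<in>A - {a0}. l j * (f j - f a0))" for f :: "_ \<Rightarrow> real"
    using assms(1,4)
    by (simp add: sum.remove c_def right_diff_distrib sum_subtractf sum_distrib_right)
  have "(\<Sum>a\<in>A. c a) = 0" using split[of "\<lambda>_. 1"] by simp
  moreover have "(\<Sum>a\<in>A. c a * a i) = 0" for i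
  proof (cases "i < k")
    case False
    then have "a i = 0" if "a \<in> A" for a using assms(2) that by (auto simp: Rn_def)
    then show ?thesis by (auto intro!: sum.neutral)
  qed (use split[of "\<lambda>a. a i"] l in simp)
  ultimately have c: "\<forall>a\<in>A. c a = 0" using assms(3) unfolding affinely_independent_def by blast
  show "\<forall>j\<in>A - {a0}. l j = 0"
  proof
    fix j assume "j \<in> A - {a0}"
    then show "l j = 0" using c[rule_format, of j] by (simp add: c_def)
  qed
qed

lemma affinely_independent_dual_vectors:
  assumes "finite A" "A \<subseteq> Rn k" "affinely_independent A"
  shows "\<exists>W. \<forall>a\<in>A. \<forall>a'\<in>A. \<forall>a''\<in>A.
           dot k (W a) (\<lambda>i. a' i - a'' i) = (if a = a' then 1 else 0) - (if a = a'' then 1 else 0)"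
proof (cases "A = {}")
  case False
  then obtain a0 where a0: "a0 \<in> A" by blast
  define V where "V a = (\<lambda>i. a i - a0 i)" for a :: "nat \<Rightarrow> real"
  obtain w where w: "\<forall>j\<in>A - {a0}. \<forall>j'\<in>A - {a0}. dot k (w j) (V j') = (if j = j' then 1 else 0)"
    using dual_family_exists[of "A - {a0}" k V] affinely_independent_differences[OF assms a0] assms(1)
    by (auto simp: V_def)
  \<comment> \<open>\<open>W a\<close> is the gradient of the barycentric coordinate of \<open>a\<close>; they sum to zero.\<close>
  define W where "W a = (if a = a0 then (\<lambda>i. - (\<Sum>j\<in>A - {a0}. w j i)) else w a)" for a
  have W: "dot k (W a) (V a') = (if a = a' then 1 else 0) - (if a = a0 then 1 else 0)"
    if "a \<in> A" "a' \<in> A" for a a'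
  proof (cases "a' = a0")
    case True
    then show ?thesis by (simp add: V_def dot_def)
  next
    case False
    have "dot k (\<lambda>i. - (\<Sum>j\<in>A - {a0}. w j i)) (V a') = - (\<Sum>j\<in>A - {a0}. dot k (w j) (V a'))"
      using dot_sum_left[of k "\<lambda>_. -1" w "A - {a0}" "V a'"] by (simp add: sum_negf)
    then show ?thesis
      using w that False assms(1) by (auto simp: W_def)
  qed
  have "dot k (W a) (\<lambda>i. a' i - a'' i) = dot k (W a) (V a') - dot k (W a) (V a'')" for a a' a''
    by (simp add: V_def dot_commute[of k "W a"] dot_diff_left[symmetric])
  then show ?thesis using W by (intro exI[of _ W]) auto
qed simp

lemma torus_realizable_excess_near_constant:
  assumes A: "finite A" and p: "2 \<le> p" and P: "torus_realizable p A P"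
    and sym: "\<And>a a'. D a a' = D a' a" and diag: "\<And>a. D a a = 0"
    and near: "\<And>a a'. a \<in> A \<Longrightarrow> a' \<in> A \<Longrightarrow> a \<noteq> a' \<Longrightarrow> \<bar>D a a' - P a a' - \<beta>\<bar> \<le> \<gamma>"
    and "(2 * real (card A) - 3) * \<gamma> \<le> \<beta>" "0 \<le> \<gamma>"
  shows "torus_realizable p A D"
proof -
  have "torus_realizable p A (\<lambda>a a'. D a a' - P a a')"
  proof (rule torus_realizable_near_constant[OF A p _ _ near assms(7,8)])
    show "D a a' - P a a' = D a' a - P a' a" if "a \<in> A" "a' \<in> A" for a a'
      using torus_realizable_symmetric[OF P that] sym by simp
    show "D a a - P a a = 0" if "a \<in> A" for a
      using torus_realizable_diagonal[OF P that] diag by simp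
  qed
  then have "torus_realizable p A (\<lambda>a a'. P a a' + (D a a' - P a a'))"
    by (rule torus_realizable_add[OF P])
  then show ?thesis
    by (rule torus_realizable_cong) simp
qed

lemma eventually_torus_realizable_sqdist:
  assumes A: "finite A" "A \<subseteq> Rn k" "affinely_independent A"
  shows "eventually (\<lambda>p. torus_realizable p A (sqdist k)) sequentially"
proof -
  obtain W where W: "\<forall>a\<in>A. \<forall>a'\<in>A. \<forall>a''\<in>A.
      dot k (W a) (\<lambda>i. a' i - a'' i) = (if a = a' then 1 else 0) - (if a = a'' then 1 else 0)"
    using affinely_independent_dual_vectors[OF A] by blast
  define N where "N = real (card A)"
  define C where "C = 1 + (\<Sum>a\<in>A. \<Sum>a'\<in>A. sqdist k (W a) (W a'))"
  define s where "s = 1 / ((2 * N + 1) * C)"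
  define \<gamma> where "\<gamma> = s / (2 * N + 1)"
  have C: "sqdist k (W a) (W a') \<le> C" if "a \<in> A" "a' \<in> A" for a a'
  proof -
    have "sqdist k (W a) (W a') \<le> (\<Sum>a'\<in>A. sqdist k (W a) (W a'))"
      using that A(1) by (intro member_le_sum) (auto simp: sqdist_nonneg)
    also have "\<dots> \<le> (\<Sum>a\<in>A. \<Sum>a'\<in>A. sqdist k (W a) (W a'))"
      using that A(1) by (intro member_le_sum[where f="\<lambda>a. \<Sum>a'\<in>A. sqdist k (W a) (W a')"])
        (auto intro: sum_nonneg simp: sqdist_nonneg)
    finally show ?thesis by (simp add: C_def)
  qed
  have "1 \<le> C" by (simp add: C_def sum_nonneg sqdist_nonneg)
  moreover have "0 < 2 * N + 1" by (simp add: N_def)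
  ultimately have s: "0 < s" and \<gamma>: "0 < \<gamma>" and sC: "(2 * N + 1) * s * C = 1"
    by (simp_all add: s_def \<gamma>_def)
  have "(2 * N + 1) * (s^2 * C + \<gamma>) = s * ((2 * N + 1) * s * C) + s"
    using \<open>0 < 2 * N + 1\<close> by (simp add: \<gamma>_def power2_eq_square field_simps)
  then have error: "(2 * N + 1) * (s^2 * C + \<gamma>) = 2 * s" using sC by simp
  define b where "b a = (\<lambda>i. a i - s * W a i)" for a
  have shrink: "sqdist k (b a) (b a') = sqdist k a a' - 4 * s + s^2 * sqdist k (W a) (W a')"
    if "a \<in> A" "a' \<in> A" "a \<noteq> a'" for a a'
  proof -
    have "dot k (\<lambda>i. a i - a' i) (\<lambda>i. W a i - W a' i)
        = dot k (W a) (\<lambda>i. a i - a' i) - dot k (W a') (\<lambda>i. a i - a' i)"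
      unfolding dot_commute[of k "\<lambda>i. a i - a' i"] by (simp add: dot_diff_left)
    also have "\<dots> = 2" using W that by auto
    finally show ?thesis by (simp add: b_def sqdist_shift)
  qed
  have "eventually (\<lambda>p. 2 \<le> p \<and> (\<exists>P. torus_realizable p A P \<and>
          (\<forall>a\<in>A. \<forall>a'\<in>A. \<bar>P a a' - sqdist k (b a) (b a')\<bar> \<le> \<gamma>))) sequentially"
    by (intro eventually_conj eventually_ge_at_top
        eventually_torus_realizable_approx_sqdist[OF A(1) \<gamma>, where k = k and b = b])
  then show ?thesis
  proof (rule eventually_mono)
    fix p assume "2 \<le> p \<and> (\<exists>P. torus_realizable p A P \<and>
        (\<forall>a\<in>A. \<forall>a'\<in>A. \<bar>P a a' - sqdist k (b a) (b a')\<bar> \<le> \<gamma>))"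
    then obtain P where p: "2 \<le> p" and P: "torus_realizable p A P"
      and close: "\<And>a a'. a \<in> A \<Longrightarrow> a' \<in> A \<Longrightarrow> \<bar>P a a' - sqdist k (b a) (b a')\<bar> \<le> \<gamma>"
      by blast
    show "torus_realizable p A (sqdist k)"
    proof (rule torus_realizable_excess_near_constant[OF A(1) p P])
      show "sqdist k a a' = sqdist k a' a" for a a' by (rule sqdist_commute)
      show "\<bar>sqdist k a a' - P a a' - 4 * s\<bar> \<le> s^2 * C + \<gamma>"
        if "a \<in> A" "a' \<in> A" "a \<noteq> a'" for a a'
      proof -
        have "0 \<le> s^2 * sqdist k (W a) (W a')" "s^2 * sqdist k (W a) (W a') \<le> s^2 * C"
          using C[OF that(1,2)] by (simp_all add: sqdist_nonneg mult_left_mono)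
        then show ?thesis
          using shrink[OF that] close[OF that(1,2)] unfolding abs_le_iff by linarith
      qed
      have "(2 * N - 3) * (s^2 * C + \<gamma>) \<le> (2 * N + 1) * (s^2 * C + \<gamma>)"
        using s \<gamma> \<open>1 \<le> C\<close> by (intro mult_right_mono) auto
      then show "(2 * real (card A) - 3) * (s^2 * C + \<gamma>) \<le> 4 * s"
        using s error by (simp add: N_def)
      show "0 \<le> s^2 * C + \<gamma>" using \<gamma> \<open>1 \<le> C\<close> by simp
    qed simp
  qed
qed

theorem theorem6:
  fixes k :: nat and A :: "(nat \<Rightarrow> real) set"
  assumes "finite A" and "A \<subseteq> Rn k" and "affinely_independent A"
  shows "\<exists>p0. \<forall>p. prime p \<and> p \<ge> p0 \<longrightarrow> euclidean_sub_p_toral p k A"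
proof -
  obtain p0 where "\<forall>p\<ge>p0. torus_realizable p A (sqdist k)"
    using eventually_torus_realizable_sqdist[OF assms] by (auto simp: eventually_sequentially)
  then have "euclidean_sub_p_toral p k A" if "prime p" "p \<ge> p0" for p
    using euclidean_sub_p_toral_if_realizable[OF prime_ge_2_nat assms(1,2)] that by blast
  then show ?thesis by blast
qed

end
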